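(* Let $\mathcal U\subseteq M(\mathbb C)^g$ be a non-commutative domain and let $f:\mathcal U\to M(\mathbb C)^{\tilde g}$ be a free map. Suppose $X\in\mathcal U(n)$, $Y\in\mathcal U(m)$, $\Gamma$ is an $n\times m$ complex matrix, and $f(X)\Gamma=\Gamma f(Y)$. If $f[n+m]^{-1}\big(\{f(X)\oplus f(Y)\}\big)$ has compact closure in $\mathcal U(n+m)$, then $X\Gamma=\Gamma Y$.
   Context: $M_n(\mathbb C)^g$ denotes $g$-tuples $X=(X_1,\dots,X_g)$ of $n\times n$ complex matrices; $X\Gamma=(X_1\Gamma,\dots,X_g\Gamma)$, $\Gamma Y=(\Gamma Y_1,\dots,\Gamma Y_g)$, $U^*XU$ entrywise, $X\oplus Y=(X_1\oplus Y_1,\dots,X_g\oplus Y_g)$ (block diagonal). A non-commutative set $\mathcal U\subseteq M(\mathbb C)^g$ is a sequence $(\mathcal U(n))_n$, $\mathcal U(n)\subseteq M_n(\mathbb C)^g$, closed under simultaneous unitary similarity and under direct sums; it is a non-commutative domain if each $\mathcal U(n)$ is open and connected. A free map $f:\mathcal U\to M(\mathbb C)^{\tilde g}$ is a sequence of functions $f[n]:\mathcal U(n)\to M_n(\mathbb C)^{\tilde g}$ such that whenever $X\in\mathcal U(n)$, $Y\in\mathcal U(m)$, $\Gamma\in\mathbb C^{n\times m}$ with $X\Gamma=\Gamma Y$, then $f[n](X)\Gamma=\Gamma f[m](Y)$; one writes $f(X)=f[n](X)$. *)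

theory Defs
  imports "HOL-Analysis.Analysis" "Jordan_Normal_Form.Matrix"
begin

definition tuples :: "nat \<Rightarrow> nat \<Rightarrow> complex mat list set" where
  "tuples g n = {X. length X = g \<and> (\<forall>A\<in>set X. A \<in> carrier_mat n n)}"

definition adj :: "complex mat \<Rightarrow> complex mat" where
  "adj A = mat (dim_col A) (dim_row A) (\<lambda>(i,j). cnj (A $$ (j,i)))"

definition unitary_mat :: "nat \<Rightarrow> complex mat \<Rightarrow> bool" where
  "unitary_mat n U \<longleftrightarrow> U \<in> carrier_mat n n \<and> adj U * U = 1\<^sub>m n"

definition tmult_r :: "complex mat list \<Rightarrow> complex mat \<Rightarrow> complex mat list" where
  "tmult_r X G = map (\<lambda>A. A * G) X"

definition tmult_l :: "complex mat \<Rightarrow> complex mat list \<Rightarrow> complex mat list" where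
  "tmult_l G Y = map (\<lambda>A. G * A) Y"

definition tconj :: "complex mat \<Rightarrow> complex mat list \<Rightarrow> complex mat list" where
  "tconj U X = map (\<lambda>A. adj U * A * U) X"

definition dsum :: "complex mat \<Rightarrow> complex mat \<Rightarrow> complex mat" where
  "dsum A B = four_block_mat A (0\<^sub>m (dim_row A) (dim_col B)) (0\<^sub>m (dim_row B) (dim_col A)) B"

definition tdsum :: "complex mat list \<Rightarrow> complex mat list \<Rightarrow> complex mat list" where
  "tdsum X Y = map2 dsum X Y"

text \<open>Topology on M_n(C)^g: the Euclidean topology, obtained by pulling back the
  product topology along the (injective) flattening into coordinate functions;
  on tuples of fixed size only finitely many coordinates vary, so this is the usual
  topology of C^(g n^2).\<close>
definition tflat :: "complex mat list \<Rightarrow> (nat \<times> nat \<times> nat \<Rightarrow> complex)" where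
  "tflat X = (\<lambda>(k,i,j). if k < length X \<and> i < dim_row (X!k) \<and> j < dim_col (X!k)
                          then X!k $$ (i,j) else 0)"

definition mtop :: "nat \<Rightarrow> nat \<Rightarrow> complex mat list topology" where
  "mtop g n = pullback_topology (tuples g n) tflat euclidean"

definition nc_set :: "nat \<Rightarrow> (nat \<Rightarrow> complex mat list set) \<Rightarrow> bool" where
  "nc_set g U \<longleftrightarrow>
     (\<forall>n>0. U n \<subseteq> tuples g n) \<and>
     (\<forall>n>0. \<forall>X\<in>U n. \<forall>V. unitary_mat n V \<longrightarrow> tconj V X \<in> U n) \<and>
     (\<forall>n>0. \<forall>m>0. \<forall>X\<in>U n. \<forall>Y\<in>U m. tdsum X Y \<in> U (n + m))"

definition nc_domain :: "nat \<Rightarrow> (nat \<Rightarrow> complex mat list set) \<Rightarrow> bool" where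
  "nc_domain g U \<longleftrightarrow> nc_set g U \<and>
     (\<forall>n>0. openin (mtop g n) (U n) \<and> connectedin (mtop g n) (U n))"

definition free_map ::
  "nat \<Rightarrow> nat \<Rightarrow> (nat \<Rightarrow> complex mat list set) \<Rightarrow> (nat \<Rightarrow> complex mat list \<Rightarrow> complex mat list) \<Rightarrow> bool" where
  "free_map g g' U f \<longleftrightarrow>
     (\<forall>n>0. \<forall>X\<in>U n. f n X \<in> tuples g' n) \<and>
     (\<forall>n>0. \<forall>m>0. \<forall>X\<in>U n. \<forall>Y\<in>U m. \<forall>G\<in>carrier_mat n m.
        tmult_r X G = tmult_l G Y \<longrightarrow> tmult_r (f n X) G = tmult_l G (f m Y))"

end

theory Submission
  imports Defs
begin

text \<open>For real t let Z(t) be the block upper triangular tuple with diagonal blocks X, Y and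
  corner t (X\<Gamma> - \<Gamma>Y). The shear S(t) = [1, t\<Gamma>; 0, 1] satisfies (X \<oplus> Y) S(t) = S(t) Z(t),
  and since f(X)\<Gamma> = \<Gamma>f(Y) it commutes with f(X \<oplus> Y) = f(X) \<oplus> f(Y); so f(Z(t)) = f(X) \<oplus> f(Y)
  whenever Z(t) lies in the domain. The set of such t is therefore open (the domain is open),
  closed (it is the preimage of the compact closure of the fibre) and contains 0, hence it is the
  whole real line. A line that stays in a compact set has slope zero, so X\<Gamma> = \<Gamma>Y.\<close>

definition shear_mat :: "nat \<Rightarrow> nat \<Rightarrow> complex mat \<Rightarrow> complex mat" where
  "shear_mat n m C = four_block_mat (1\<^sub>m n) C (0\<^sub>m m n) (1\<^sub>m m)"

definition corner_mat :: "complex mat \<Rightarrow> complex mat" where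
  "corner_mat C = four_block_mat (0\<^sub>m (dim_row C) (dim_row C)) C
     (0\<^sub>m (dim_col C) (dim_row C)) (0\<^sub>m (dim_col C) (dim_col C))"

lemma dsum_carrier_mat:
  "A \<in> carrier_mat n n \<Longrightarrow> B \<in> carrier_mat m m \<Longrightarrow> dsum A B \<in> carrier_mat (n + m) (n + m)"
  unfolding dsum_def by auto

lemma corner_mat_carrier_mat: "C \<in> carrier_mat n m \<Longrightarrow> corner_mat C \<in> carrier_mat (n + m) (n + m)"
  unfolding corner_mat_def by auto

lemma shear_mat_carrier_mat: "shear_mat n m C \<in> carrier_mat (n + m) (n + m)"
  unfolding shear_mat_def by auto

lemma shear_mat_uminus_mult:
  assumes "C \<in> carrier_mat n m"
  shows "shear_mat n m (- C) * shear_mat n m C = 1\<^sub>m (n + m)"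
  unfolding shear_mat_def using assms
  by (subst mult_four_block_mat[of _ n n _ m _ m _ _ n _ m], auto intro!: eq_matI simp flip: four_block_one_mat)

lemma dsum_plus_smult_corner_mat:
  assumes "A \<in> carrier_mat n n" "B \<in> carrier_mat m m" "C \<in> carrier_mat n m"
  shows "dsum A B + c \<cdot>\<^sub>m corner_mat C = four_block_mat A (c \<cdot>\<^sub>m C) (0\<^sub>m m n) B"
  using assms unfolding dsum_def corner_mat_def by (auto intro!: eq_matI)

lemma dsum_mult_shear_mat:
  assumes A: "A \<in> carrier_mat n n" and B: "B \<in> carrier_mat m m" and G: "G \<in> carrier_mat n m"
  shows "dsum A B * shear_mat n m (c \<cdot>\<^sub>m G)
    = shear_mat n m (c \<cdot>\<^sub>m G) * (dsum A B + c \<cdot>\<^sub>m corner_mat (A * G - G * B))"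
proof -
  have "dsum A B = four_block_mat A (0\<^sub>m n m) (0\<^sub>m m n) B"
    using A B unfolding dsum_def by auto
  moreover have "dsum A B + c \<cdot>\<^sub>m corner_mat (A * G - G * B)
      = four_block_mat A (c \<cdot>\<^sub>m (A * G - G * B)) (0\<^sub>m m n) B"
    using A B G by (intro dsum_plus_smult_corner_mat) auto
  ultimately show ?thesis
    unfolding shear_mat_def using A B G
    apply (simp only:)
    apply (subst (1 2) mult_four_block_mat[of _ n n _ m _ m _ _ n _ m])
    apply (auto intro!: cong_four_block_mat)
    by (auto intro!: eq_matI simp: scalar_prod_def sum_distrib_left algebra_simps sum_subtractf)
qed

definition inj1_mat :: "nat \<Rightarrow> nat \<Rightarrow> complex mat" where
  "inj1_mat n m = mat (n + m) n (\<lambda>(i, j). of_bool (i = j))"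

definition inj2_mat :: "nat \<Rightarrow> nat \<Rightarrow> complex mat" where
  "inj2_mat n m = mat (n + m) m (\<lambda>(i, j). of_bool (i = j + n))"

lemma inj_mat_carrier_mat:
  "inj1_mat n m \<in> carrier_mat (n + m) n" "inj2_mat n m \<in> carrier_mat (n + m) m"
  unfolding inj1_mat_def inj2_mat_def by auto

lemma index_mult_inj1_mat:
  assumes "W \<in> carrier_mat N (n + m)" "i < N" "j < n"
  shows "(W * inj1_mat n m) $$ (i, j) = W $$ (i, j)"
  using assms unfolding inj1_mat_def by (simp add: scalar_prod_def)

lemma index_mult_inj2_mat:
  assumes "W \<in> carrier_mat N (n + m)" "i < N" "j < m"
  shows "(W * inj2_mat n m) $$ (i, j) = W $$ (i, j + n)"
  using assms unfolding inj2_mat_def by (simp add: scalar_prod_def)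

lemma index_inj1_mat_mult:
  assumes "A \<in> carrier_mat n N" "i < n + m" "j < N"
  shows "(inj1_mat n m * A) $$ (i, j) = (if i < n then A $$ (i, j) else 0)"
  using assms unfolding inj1_mat_def by (simp add: scalar_prod_def)

lemma index_inj2_mat_mult:
  assumes "B \<in> carrier_mat m N" "i < n + m" "j < N"
  shows "(inj2_mat n m * B) $$ (i, j) = (if i < n then 0 else B $$ (i - n, j))"
proof -
  have "{0..<m} \<inter> {k. i = k + n} = (if i < n then {} else {i - n})"
    using assms by auto
  then show ?thesis
    using assms unfolding inj2_mat_def by (simp add: scalar_prod_def)
qed

lemma dsum_mult_inj1_mat:
  assumes A: "A \<in> carrier_mat n n" and B: "B \<in> carrier_mat m m"
  shows "dsum A B * inj1_mat n m = inj1_mat n m * A"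
proof (rule eq_matI)
  fix i j assume "i < dim_row (inj1_mat n m * A)" "j < dim_col (inj1_mat n m * A)"
  then have ij: "i < n + m" "j < n" using A inj_mat_carrier_mat(1)[of n m] by auto
  then show "(dsum A B * inj1_mat n m) $$ (i, j) = (inj1_mat n m * A) $$ (i, j)"
    using index_mult_inj1_mat[OF dsum_carrier_mat[OF A B] ij] A B
    by (simp add: index_inj1_mat_mult dsum_def)
qed (use A B in \<open>auto simp: dsum_def inj1_mat_def\<close>)

lemma dsum_mult_inj2_mat:
  assumes A: "A \<in> carrier_mat n n" and B: "B \<in> carrier_mat m m"
  shows "dsum A B * inj2_mat n m = inj2_mat n m * B"
proof (rule eq_matI)
  fix i j assume "i < dim_row (inj2_mat n m * B)" "j < dim_col (inj2_mat n m * B)"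
  then have ij: "i < n + m" "j < m" using B inj_mat_carrier_mat(2)[of n m] by auto
  then show "(dsum A B * inj2_mat n m) $$ (i, j) = (inj2_mat n m * B) $$ (i, j)"
    using index_mult_inj2_mat[OF dsum_carrier_mat[OF A B] ij] A B
    by (simp add: index_inj2_mat_mult dsum_def)
qed (use A B in \<open>auto simp: dsum_def inj2_mat_def\<close>)

lemma eq_dsum_if_mult_inj_mat:
  assumes W: "W \<in> carrier_mat (n + m) (n + m)" and A: "A \<in> carrier_mat n n" and B: "B \<in> carrier_mat m m"
    and WA: "W * inj1_mat n m = inj1_mat n m * A" and WB: "W * inj2_mat n m = inj2_mat n m * B"
  shows "W = dsum A B"
proof (rule eq_matI)
  fix i j assume "i < dim_row (dsum A B)" "j < dim_col (dsum A B)"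
  then have ij: "i < n + m" "j < n + m" using dsum_carrier_mat[OF A B] by auto
  show "W $$ (i, j) = dsum A B $$ (i, j)"
  proof (cases "j < n")
    case True
    then have "W $$ (i, j) = (inj1_mat n m * A) $$ (i, j)"
      using ij W by (simp flip: WA add: index_mult_inj1_mat)
    then show ?thesis using True ij A B by (simp add: index_inj1_mat_mult dsum_def)
  next
    case False
    then have "W $$ (i, j) = (inj2_mat n m * B) $$ (i, j - n)"
      using ij W by (simp flip: WB add: index_mult_inj2_mat)
    then show ?thesis using False ij A B by (simp add: index_inj2_mat_mult dsum_def)
  qed
qed (use W A B dsum_carrier_mat[OF A B] in auto)

lemma tuples_iff: "X \<in> tuples g n \<longleftrightarrow> length X = g \<and> (\<forall>k<g. X ! k \<in> carrier_mat n n)"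
  unfolding tuples_def by (auto simp: all_set_conv_all_nth)

lemma tuplesD:
  assumes "X \<in> tuples g n"
  shows "length X = g" "k < g \<Longrightarrow> X ! k \<in> carrier_mat n n"
  using assms by (auto simp: tuples_iff)

lemma tdsum_in_tuples:
  assumes "X \<in> tuples g n" "Y \<in> tuples g m"
  shows "tdsum X Y \<in> tuples g (n + m)"
  using assms by (simp add: tuples_iff tdsum_def dsum_carrier_mat)

lemma tmult_r_eq_nth:
  assumes "tmult_r A S = tmult_l S B" "k < length A"
  shows "A ! k * S = S * B ! k"
proof -
  have "length B = length A" using arg_cong[OF assms(1), of length] by (simp add: tmult_r_def tmult_l_def)
  then show ?thesis
    using arg_cong[OF assms(1), of "\<lambda>Zs. Zs ! k"] assms(2) by (simp add: tmult_r_def tmult_l_def)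
qed

lemma tmult_r_eq_iff_nth:
  "tmult_r A S = tmult_l S B \<longleftrightarrow> length A = length B \<and> (\<forall>k < length A. A ! k * S = S * B ! k)"
  unfolding tmult_r_def tmult_l_def by (auto simp: list_eq_iff_nth_eq)

lemma tmult_l_cancel:
  assumes P: "P \<in> tuples g N" and Q: "Q \<in> tuples g N"
    and S: "S \<in> carrier_mat N N" "S' \<in> carrier_mat N N" "S' * S = 1\<^sub>m N"
    and eq: "tmult_l S P = tmult_l S Q"
  shows "P = Q"
proof (rule nth_equalityI)
  show "length P = length Q" using tuplesD(1)[OF P] tuplesD(1)[OF Q] by simp
  fix k assume "k < length P"
  then have k: "k < g" using tuplesD(1)[OF P] by simp
  have SPQ: "S * P ! k = S * Q ! k"
    using arg_cong[OF eq, of "\<lambda>Zs. Zs ! k"] k tuplesD(1)[OF P] tuplesD(1)[OF Q]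
    by (simp add: tmult_l_def)
  note Pk = tuplesD(2)[OF P k] and Qk = tuplesD(2)[OF Q k]
  have "P ! k = (S' * S) * P ! k" using S(3) Pk by simp
  also have "\<dots> = S' * (S * P ! k)" by (rule assoc_mult_mat[OF S(2) S(1) Pk])
  also have "\<dots> = S' * (S * Q ! k)" by (simp add: SPQ)
  also have "\<dots> = (S' * S) * Q ! k" by (rule assoc_mult_mat[OF S(2) S(1) Qk, symmetric])
  also have "\<dots> = Q ! k" using S(3) Qk by simp
  finally show "P ! k = Q ! k" .
qed

definition intertwining_defect ::
  "complex mat \<Rightarrow> complex mat list \<Rightarrow> complex mat list \<Rightarrow> complex mat list" where
  "intertwining_defect G X Y = map2 (\<lambda>A B. corner_mat (A * G - G * B)) X Y"

definition deform_tuple ::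
  "complex \<Rightarrow> complex mat \<Rightarrow> complex mat list \<Rightarrow> complex mat list \<Rightarrow> complex mat list" where
  "deform_tuple c G X Y = map2 (\<lambda>D E. D + c \<cdot>\<^sub>m E) (tdsum X Y) (intertwining_defect G X Y)"

lemma intertwining_defect_in_tuples:
  assumes "X \<in> tuples g n" "Y \<in> tuples g m" "G \<in> carrier_mat n m"
  shows "intertwining_defect G X Y \<in> tuples g (n + m)"
  using assms
  by (auto simp: tuples_iff intertwining_defect_def intro!: corner_mat_carrier_mat minus_carrier_mat)

lemma deform_tuple_in_tuples:
  assumes "X \<in> tuples g n" "Y \<in> tuples g m" "G \<in> carrier_mat n m"
  shows "deform_tuple c G X Y \<in> tuples g (n + m)"
  using tdsum_in_tuples[OF assms(1,2)] intertwining_defect_in_tuples[OF assms]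
  by (simp add: tuples_iff deform_tuple_def)

lemma deform_tuple_zero:
  assumes "X \<in> tuples g n" "Y \<in> tuples g m" "G \<in> carrier_mat n m"
  shows "deform_tuple 0 G X Y = tdsum X Y"
proof -
  have add_zero_smult: "D + 0 \<cdot>\<^sub>m E = D"
    if "D \<in> carrier_mat N N" "E \<in> carrier_mat N N" for D E :: "complex mat" and N
    using that by (auto intro!: eq_matI)
  then show ?thesis
    using tuplesD[OF tdsum_in_tuples[OF assms(1,2)]] tuplesD[OF intertwining_defect_in_tuples[OF assms]]
    unfolding deform_tuple_def by (auto intro!: nth_equalityI add_zero_smult)
qed

lemma deform_tuple_eq_tdsum_if_intertwines:
  assumes X: "X \<in> tuples g n" and Y: "Y \<in> tuples g m" and G: "G \<in> carrier_mat n m"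
    and XY: "tmult_r X G = tmult_l G Y"
  shows "deform_tuple c G X Y = tdsum X Y"
proof -
  have comm: "X ! k * G = G * Y ! k" if "k < g" for k
    using arg_cong[OF XY, of "\<lambda>Zs. Zs ! k"] that tuplesD(1)[OF X] tuplesD(1)[OF Y]
    by (simp add: tmult_r_def tmult_l_def)
  have "corner_mat (X ! k * G - G * Y ! k) = 0\<^sub>m (n + m) (n + m)" if "k < g" for k
    using comm[OF that] G tuplesD(2)[OF X that] tuplesD(2)[OF Y that] unfolding corner_mat_def by auto
  then show ?thesis
    using tuplesD[OF X] tuplesD[OF Y]
    unfolding deform_tuple_def tdsum_def intertwining_defect_def
    by (auto intro!: nth_equalityI simp: dsum_carrier_mat)
qed

lemma tdsum_mult_shear_mat:
  assumes "X \<in> tuples g n" "Y \<in> tuples g m" "G \<in> carrier_mat n m"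
  shows "tmult_r (tdsum X Y) (shear_mat n m (c \<cdot>\<^sub>m G))
    = tmult_l (shear_mat n m (c \<cdot>\<^sub>m G)) (deform_tuple c G X Y)"
  using tuplesD[OF assms(1)] tuplesD[OF assms(2)] assms(3)
  unfolding tmult_r_def tmult_l_def deform_tuple_def tdsum_def intertwining_defect_def
  by (auto intro!: nth_equalityI dsum_mult_shear_mat)

lemma nc_setD:
  assumes "nc_set g U" "n > 0"
  shows "U n \<subseteq> tuples g n" "m > 0 \<Longrightarrow> X \<in> U n \<Longrightarrow> Y \<in> U m \<Longrightarrow> tdsum X Y \<in> U (n + m)"
  using assms unfolding nc_set_def by auto

lemma free_mapD:
  assumes "free_map g g' U f" "n > 0" "X \<in> U n"
  shows "f n X \<in> tuples g' n"
    "m > 0 \<Longrightarrow> Y \<in> U m \<Longrightarrow> G \<in> carrier_mat n m \<Longrightarrow> tmult_r X G = tmult_l G Y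
      \<Longrightarrow> tmult_r (f n X) G = tmult_l G (f m Y)"
  using assms unfolding free_map_def by auto

lemma free_map_eq_if_similar_commuting:
  assumes f: "free_map g g' U f" and N: "N > 0" and A: "A \<in> U N" and B: "B \<in> U N"
    and S: "S \<in> carrier_mat N N" "S' \<in> carrier_mat N N" "S' * S = 1\<^sub>m N"
    and AB: "tmult_r A S = tmult_l S B" and fA: "tmult_r (f N A) S = tmult_l S (f N A)"
  shows "f N B = f N A"
  using free_mapD(2)[OF f N A N B S(1) AB] fA
  by (intro tmult_l_cancel[OF free_mapD(1)[OF f N B] free_mapD(1)[OF f N A] S]) simp

lemma free_map_tdsum:
  assumes U: "nc_set g U" and f: "free_map g g' U f" and n: "n > 0" and m: "m > 0"
    and X: "X \<in> U n" and Y: "Y \<in> U m"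
  shows "f (n + m) (tdsum X Y) = tdsum (f n X) (f m Y)"
proof -
  have Xt: "X \<in> tuples g n" and Yt: "Y \<in> tuples g m" and XY: "tdsum X Y \<in> U (n + m)"
    using nc_setD[OF U n] nc_setD(1)[OF U m] m X Y by auto
  have nm: "n + m > 0" using n by simp
  have "tmult_r (tdsum X Y) (inj1_mat n m) = tmult_l (inj1_mat n m) X"
    using tuplesD[OF Xt] tuplesD[OF Yt]
    by (simp add: tmult_r_eq_iff_nth tdsum_def dsum_mult_inj1_mat)
  from free_mapD(2)[OF f nm XY n X inj_mat_carrier_mat(1) this]
  have fX: "tmult_r (f (n + m) (tdsum X Y)) (inj1_mat n m) = tmult_l (inj1_mat n m) (f n X)" .
  have "tmult_r (tdsum X Y) (inj2_mat n m) = tmult_l (inj2_mat n m) Y"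
    using tuplesD[OF Xt] tuplesD[OF Yt]
    by (simp add: tmult_r_eq_iff_nth tdsum_def dsum_mult_inj2_mat)
  from free_mapD(2)[OF f nm XY m Y inj_mat_carrier_mat(2) this]
  have fY: "tmult_r (f (n + m) (tdsum X Y)) (inj2_mat n m) = tmult_l (inj2_mat n m) (f m Y)" .
  note W = tuplesD[OF free_mapD(1)[OF f nm XY]]
  note FX = tuplesD[OF free_mapD(1)[OF f n X]] and FY = tuplesD[OF free_mapD(1)[OF f m Y]]
  show ?thesis
  proof (rule nth_equalityI)
    show "length (f (n + m) (tdsum X Y)) = length (tdsum (f n X) (f m Y))"
      using W FX FY by (simp add: tdsum_def)
    fix k assume "k < length (f (n + m) (tdsum X Y))"
    then have k: "k < g'" using W by simp
    show "f (n + m) (tdsum X Y) ! k = tdsum (f n X) (f m Y) ! k"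
      using eq_dsum_if_mult_inj_mat[OF W(2)[OF k] FX(2)[OF k] FY(2)[OF k]]
        tmult_r_eq_nth[OF fX] tmult_r_eq_nth[OF fY] k W FX FY
      by (simp add: tdsum_def)
  qed
qed

lemma free_map_deform_tuple:
  assumes U: "nc_set g U" and f: "free_map g g' U f" and n: "n > 0" and m: "m > 0"
    and X: "X \<in> U n" and Y: "Y \<in> U m" and G: "G \<in> carrier_mat n m"
    and fXY: "tmult_r (f n X) G = tmult_l G (f m Y)" and D: "deform_tuple c G X Y \<in> U (n + m)"
  shows "f (n + m) (deform_tuple c G X Y) = tdsum (f n X) (f m Y)"
proof -
  define S where "S = shear_mat n m (c \<cdot>\<^sub>m G)"
  have Xt: "X \<in> tuples g n" and Yt: "Y \<in> tuples g m" and XY: "tdsum X Y \<in> U (n + m)"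
    using nc_setD[OF U n] nc_setD(1)[OF U m] m X Y by auto
  note fX = free_mapD(1)[OF f n X] and fY = free_mapD(1)[OF f m Y]
  have "f (n + m) (deform_tuple c G X Y) = f (n + m) (tdsum X Y)"
  proof (rule free_map_eq_if_similar_commuting[OF f _ XY D])
    show "S \<in> carrier_mat (n + m) (n + m)" "shear_mat n m (- (c \<cdot>\<^sub>m G)) * S = 1\<^sub>m (n + m)"
      using G unfolding S_def by (auto intro!: shear_mat_uminus_mult shear_mat_carrier_mat)
    show "tmult_r (tdsum X Y) S = tmult_l S (deform_tuple c G X Y)"
      unfolding S_def by (rule tdsum_mult_shear_mat[OF Xt Yt G])
    show "tmult_r (f (n + m) (tdsum X Y)) S = tmult_l S (f (n + m) (tdsum X Y))"
      using tdsum_mult_shear_mat[OF fX fY G] deform_tuple_eq_tdsum_if_intertwines[OF fX fY G fXY]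
      unfolding S_def free_map_tdsum[OF U f n m X Y] by simp
  qed (use n shear_mat_carrier_mat in auto)
  then show ?thesis using free_map_tdsum[OF U f n m X Y] by simp
qed

lemma inj_on_tflat: "inj_on tflat (tuples g N)"
proof (rule inj_onI)
  fix A B assume A: "A \<in> tuples g N" and B: "B \<in> tuples g N" and eq: "tflat A = tflat B"
  show "A = B"
  proof (rule nth_equalityI)
    show "length A = length B" using tuplesD(1)[OF A] tuplesD(1)[OF B] by simp
    fix k assume "k < length A"
    then have k: "k < g" using tuplesD(1)[OF A] by simp
    note Ak = tuplesD(2)[OF A k] and Bk = tuplesD(2)[OF B k]
    show "A ! k = B ! k"
    proof (rule eq_matI)
      fix i j assume "i < dim_row (B ! k)" "j < dim_col (B ! k)"
      then show "A ! k $$ (i, j) = B ! k $$ (i, j)"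
        using fun_cong[OF eq, of "(k, i, j)"] k Ak Bk tuplesD(1)[OF A] tuplesD(1)[OF B]
        by (simp add: tflat_def)
    qed (use Ak Bk in auto)
  qed
qed

lemma topspace_mtop: "topspace (mtop g N) = tuples g N"
  unfolding mtop_def topspace_pullback_topology by simp

lemma continuous_map_tflat: "continuous_map (mtop g N) euclidean tflat"
  using continuous_map_pullback[of euclidean euclidean id "tuples g N" tflat] unfolding mtop_def by simp

lemma compact_tflat_image:
  assumes "compactin (mtop g N) K"
  shows "compact (tflat ` K)"
  using image_compactin[OF assms continuous_map_tflat] by simp

lemma real_path_stays_in_compact:
  fixes p :: "real \<Rightarrow> complex mat list"
  assumes V: "openin (mtop g N) V" and K: "compactin (mtop g N) K" "K \<subseteq> V"
    and p: "\<And>t. p t \<in> tuples g N" "continuous_on UNIV (\<lambda>t. tflat (p t))"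
    and trapped: "\<And>t. p t \<in> V \<Longrightarrow> p t \<in> K" and start: "p t0 \<in> V"
  shows "p t \<in> K"
proof -
  define T where "T = {t. p t \<in> V}"
  obtain W where W: "open W" "V = tflat -` W \<inter> tuples g N"
    using V unfolding mtop_def openin_pullback_topology by auto
  have "T = (\<lambda>t. tflat (p t)) -` W" unfolding T_def W(2) using p(1) by auto
  then have "open T" using p(2) W(1) by (simp add: continuous_on_open_vimage)
  have KN: "K \<subseteq> tuples g N" using K(1) compactin_subset_topspace topspace_mtop by blast
  have "T = (\<lambda>t. tflat (p t)) -` (tflat ` K)"
    using trapped K(2) KN p(1) inj_onD[OF inj_on_tflat] unfolding T_def by blast
  moreover have "closed (tflat ` K)" using compact_tflat_image[OF K(1)] by (rule compact_imp_closed)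
  ultimately have "closed T" using p(2) by (simp add: continuous_on_closed_vimage)
  have "T = UNIV" using clopen[of T] \<open>open T\<close> \<open>closed T\<close> start unfolding T_def by auto
  then show ?thesis using trapped unfolding T_def by auto
qed

lemma tflat_map2_add_smult:
  assumes "Xs \<in> tuples g N" "Ys \<in> tuples g N"
  shows "tflat (map2 (\<lambda>D E. D + c \<cdot>\<^sub>m E) Xs Ys) q = tflat Xs q + c * tflat Ys q"
  using tuplesD[OF assms(1)] tuplesD[OF assms(2)] unfolding tflat_def
  by (fastforce split: prod.split)

lemma continuous_on_tflat_deform_tuple:
  assumes "X \<in> tuples g n" "Y \<in> tuples g m" "G \<in> carrier_mat n m"
  shows "continuous_on UNIV (\<lambda>t::real. tflat (deform_tuple (of_real t) G X Y))"
  unfolding deform_tuple_def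
    tflat_map2_add_smult[OF tdsum_in_tuples[OF assms(1,2)] intertwining_defect_in_tuples[OF assms]]
  by (intro continuous_intros)

lemma bounded_range_affine_imp_zero:
  fixes a b :: complex
  assumes "bounded (range (\<lambda>t::real. a + of_real t * b))"
  shows "b = 0"
proof (rule ccontr)
  assume b: "b \<noteq> 0"
  obtain B where B: "\<And>t::real. norm (a + of_real t * b) \<le> B"
    using assms by (auto simp: bounded_iff)
  define t where "t = (B + norm a + 1) / norm b"
  have "norm a \<le> B" using B[of 0] by simp
  then have "0 \<le> B + norm a + 1" using norm_ge_zero[of a] by linarith
  then have "t \<ge> 0" unfolding t_def by simp
  have "B + norm a + 1 = t * norm b" using b unfolding t_def by simp
  also have "\<dots> = norm (of_real t * b)" using \<open>t \<ge> 0\<close> by (simp add: norm_mult)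
  also have "\<dots> \<le> norm (a + of_real t * b) + norm a"
    using norm_triangle_ineq4[of "a + of_real t * b" a] by simp
  also have "\<dots> \<le> B + norm a" using B[of t] by simp
  finally show False by simp
qed

lemma intertwines_if_tflat_intertwining_defect_zero:
  assumes X: "X \<in> tuples g n" and Y: "Y \<in> tuples g m" and G: "G \<in> carrier_mat n m"
    and zero: "\<And>q. tflat (intertwining_defect G X Y) q = 0"
  shows "tmult_r X G = tmult_l G Y"
  unfolding tmult_r_def tmult_l_def
proof (rule nth_equalityI)
  fix k assume "k < length (map (\<lambda>A. A * G) X)"
  then have k: "k < g" using X by (simp add: tuples_iff)
  have Xk: "X ! k \<in> carrier_mat n n" and Yk: "Y ! k \<in> carrier_mat m m"
    using k X Y by (auto simp: tuples_iff)
  have "X ! k * G = G * Y ! k"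
  proof (rule eq_matI)
    fix i j assume "i < dim_row (G * Y ! k)" "j < dim_col (G * Y ! k)"
    then have ij: "i < n" "j < m" using G Yk by auto
    have "tflat (intertwining_defect G X Y) (k, i, n + j) = 0" using zero by simp
    then show "(X ! k * G) $$ (i, j) = (G * Y ! k) $$ (i, j)"
      using k ij G tuplesD(1)[OF X] tuplesD(1)[OF Y] Xk Yk
      by (simp add: tflat_def intertwining_defect_def corner_mat_def)
  qed (use G Xk Yk in auto)
  then show "map (\<lambda>A. A * G) X ! k = map ((*) G) Y ! k"
    using k X Y by (simp add: tuples_iff)
qed (use X Y in \<open>simp add: tuples_iff\<close>)

lemma intertwines_if_deform_tuple_in_compact:
  assumes X: "X \<in> tuples g n" and Y: "Y \<in> tuples g m" and G: "G \<in> carrier_mat n m"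
    and C: "compact C" and line: "\<And>t::real. tflat (deform_tuple (of_real t) G X Y) \<in> C"
  shows "tmult_r X G = tmult_l G Y"
proof (rule intertwines_if_tflat_intertwining_defect_zero[OF X Y G])
  fix q
  have "range (\<lambda>t::real. tflat (deform_tuple (of_real t) G X Y) q) \<subseteq> (\<lambda>\<phi>. \<phi> q) ` C"
    using line by auto
  moreover have "compact ((\<lambda>\<phi>. \<phi> q) ` C)"
    by (rule compact_continuous_image[OF continuous_on_subset[OF continuous_on_product_coordinates] C]) simp
  ultimately have "bounded (range (\<lambda>t::real. tflat (deform_tuple (of_real t) G X Y) q))"
    using bounded_subset compact_imp_bounded by blast
  then show "tflat (intertwining_defect G X Y) q = 0"
    unfolding deform_tuple_def
      tflat_map2_add_smult[OF tdsum_in_tuples[OF X Y] intertwining_defect_in_tuples[OF X Y G]]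
    by (rule bounded_range_affine_imp_zero)
qed

theorem proposition3p3:
  fixes g g' n m :: nat and U :: "nat \<Rightarrow> complex mat list set"
    and f :: "nat \<Rightarrow> complex mat list \<Rightarrow> complex mat list"
    and X Y :: "complex mat list" and \<Gamma> :: "complex mat"
  assumes "nc_domain g U" and "free_map g g' U f"
    and "n > 0" and "m > 0"
    and "X \<in> U n" and "Y \<in> U m" and "\<Gamma> \<in> carrier_mat n m"
    and "tmult_r (f n X) \<Gamma> = tmult_l \<Gamma> (f m Y)"
    and "compactin (subtopology (mtop g (n + m)) (U (n + m)))
           ((subtopology (mtop g (n + m)) (U (n + m))) closure_of
              {Z \<in> U (n + m). f (n + m) Z = tdsum (f n X) (f m Y)})"
  shows "tmult_r X \<Gamma> = tmult_l \<Gamma> Y"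
proof -
  from assms(1) have U: "nc_set g U" and U_open: "openin (mtop g (n + m)) (U (n + m))"
    using assms(3) unfolding nc_domain_def by auto
  note f = assms(2) and nm = assms(3,4) and G = assms(7)
  have X: "X \<in> tuples g n" and Y: "Y \<in> tuples g m" and XY: "tdsum X Y \<in> U (n + m)"
    using nc_setD[OF U nm(1)] nc_setD(1)[OF U nm(2)] nm assms(5,6) by auto
  define p where "p t = deform_tuple (of_real t) \<Gamma> X Y" for t :: real
  define K where "K = subtopology (mtop g (n + m)) (U (n + m)) closure_of
    {Z \<in> U (n + m). f (n + m) Z = tdsum (f n X) (f m Y)}"
  have cK: "compactin (mtop g (n + m)) K" using assms(9) compactin_subtopology unfolding K_def by blast
  have FK: "{Z \<in> U (n + m). f (n + m) Z = tdsum (f n X) (f m Y)} \<subseteq> K"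
    unfolding K_def
    by (rule closure_of_subset) (use nc_setD(1)[OF U, of "n + m"] nm in \<open>auto simp: topspace_mtop\<close>)
  have "p t \<in> K" for t
  proof (rule real_path_stays_in_compact[OF U_open cK])
    show "K \<subseteq> U (n + m)" unfolding K_def using closure_of_subset_topspace by fastforce
    show "p t \<in> tuples g (n + m)" for t
      unfolding p_def by (rule deform_tuple_in_tuples[OF X Y G])
    show "continuous_on UNIV (\<lambda>t. tflat (p t))"
      unfolding p_def by (rule continuous_on_tflat_deform_tuple[OF X Y G])
    show "p 0 \<in> U (n + m)" unfolding p_def using deform_tuple_zero[OF X Y G] XY by simp
    show "p t \<in> K" if "p t \<in> U (n + m)" for t
      using that free_map_deform_tuple[OF U f nm assms(5,6) G assms(8) that[unfolded p_def]] FK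
      unfolding p_def by blast
  qed
  then show ?thesis
    by (intro intertwines_if_deform_tuple_in_compact[OF X Y G compact_tflat_image[OF cK]])
      (simp add: p_def[symmetric])
qed

end
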